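(* Let $\mathcal{C}$ be a small category in which no composite of non-identity morphisms is an identity, and let $M,N$ be $k\mathcal{C}$-modules such that $X=[M]-[N]$ satisfies $d^0X=0$, i.e. $\partial_0^*M\oplus\partial_1^*N\cong\partial_0^*N\oplus\partial_1^*M$ as $k\mathcal{G}^{\mathcal{C}}_1$-modules. Then for each line-component $\mathcal{M}$ of $\mathcal{C}$, the function $\operatorname{rk}X$ is constant on the morphisms in $\mathcal{M}$, and it is constant on the set of identity morphisms $1_x$ of the objects $x$ that are domains or codomains of morphisms in $\mathcal{M}$.
   Context: A $k\mathcal{C}$-module is a functor from $\mathcal{C}$ to finite-dimensional $k$-vector spaces ($k$ a field). For $X=[M]-[N]$ in the split Grothendieck group and a morphism $\varphi$ of $\mathcal{C}$, the rank invariant is $\operatorname{rk}X(\varphi)=\operatorname{rank}M(\varphi)-\operatorname{rank}N(\varphi)$ (so $\operatorname{rk}X(1_x)=\dim M(x)-\dim N(x)$). $\mathcal{G}^{\mathcal{C}}_1$ is the category whose objects are the non-identity morphisms $u:a\to b$ of $\mathcal{C}$ (written $[u]$); its morphisms $[u]\to[v]$ ($v:c\to d$) are identities and the pairs $(w\circ u,\;v\circ w)$ for each $w:b\to c$ in $\mathcal{C}$. The functors $\partial_0,\partial_1:\mathcal{G}^{\mathcal{C}}_1\to\mathcal{C}$ are $\partial_0[u]=b$, $\partial_0(f_0,f_1)=f_1$, $\partial_1[u]=a$, $\partial_1(f_0,f_1)=f_0$, and $d^0=\partial_0^*-\partial_1^*$ with $F^*M=M\circ F$. A set of non-identity morphisms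 of $\mathcal{C}$ is a line-component if the full subcategory of $\mathcal{G}^{\mathcal{C}}_1$ on it is a connected component of $\mathcal{G}^{\mathcal{C}}_1$. *)

theory Defs
  imports "Jordan_Normal_Form.DL_Rank"
begin

text \<open>A small category: object set, morphism set, domain, codomain, identities
and composition (Comp g f = g o f, defined when Dom g = Cod f).\<close>

record ('o, 'm) cat =
  Obj  :: "'o set"
  Mor  :: "'m set"
  Dom  :: "'m \<Rightarrow> 'o"
  Cod  :: "'m \<Rightarrow> 'o"
  Id   :: "'o \<Rightarrow> 'm"
  Comp :: "'m \<Rightarrow> 'm \<Rightarrow> 'm"

definition category :: "('o, 'm) cat \<Rightarrow> bool" where
  "category C \<longleftrightarrow>
     (\<forall>f\<in>Mor C. Dom C f \<in> Obj C \<and> Cod C f \<in> Obj C) \<and>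
     (\<forall>x\<in>Obj C. Id C x \<in> Mor C \<and> Dom C (Id C x) = x \<and> Cod C (Id C x) = x) \<and>
     (\<forall>f\<in>Mor C. \<forall>g\<in>Mor C. Dom C g = Cod C f \<longrightarrow>
        Comp C g f \<in> Mor C \<and> Dom C (Comp C g f) = Dom C f \<and> Cod C (Comp C g f) = Cod C g) \<and>
     (\<forall>f\<in>Mor C. Comp C (Id C (Cod C f)) f = f \<and> Comp C f (Id C (Dom C f)) = f) \<and>
     (\<forall>f\<in>Mor C. \<forall>g\<in>Mor C. \<forall>h\<in>Mor C. Dom C g = Cod C f \<longrightarrow> Dom C h = Cod C g \<longrightarrow>
        Comp C h (Comp C g f) = Comp C (Comp C h g) f)"

text \<open>Non-identity morphisms (the objects of G_1).\<close>
definition nonid :: "('o, 'm) cat \<Rightarrow> 'm \<Rightarrow> bool" where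
  "nonid C u \<longleftrightarrow> u \<in> Mor C \<and> u \<notin> Id C ` Obj C"

text \<open>A kC-module: a functor from C to finite-dimensional k-vector spaces, given
(after choosing bases) by a dimension function d and a matrix for each morphism.\<close>
definition kC_module :: "('o, 'm) cat \<Rightarrow> ('o \<Rightarrow> nat) \<Rightarrow> ('m \<Rightarrow> 'k::field mat) \<Rightarrow> bool" where
  "kC_module C d F \<longleftrightarrow>
     (\<forall>f\<in>Mor C. F f \<in> carrier_mat (d (Cod C f)) (d (Dom C f))) \<and>
     (\<forall>x\<in>Obj C. F (Id C x) = 1\<^sub>m (d x)) \<and>
     (\<forall>f\<in>Mor C. \<forall>g\<in>Mor C. Dom C g = Cod C f \<longrightarrow> F (Comp C g f) = F g * F f)"

text \<open>Morphisms [u] \<rightarrow> [v] of G_1 (besides identities) are indexed by w : Cod u \<rightarrow> Dom v,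
given by the pair (w o u, v o w).\<close>
definition g1_hom :: "('o, 'm) cat \<Rightarrow> 'm \<Rightarrow> 'm \<Rightarrow> 'm \<Rightarrow> bool" where
  "g1_hom C u v w \<longleftrightarrow> nonid C u \<and> nonid C v \<and> w \<in> Mor C \<and>
     Dom C w = Cod C u \<and> Cod C w = Dom C v"

text \<open>Pull-back dimension/matrices of d0^* P \<oplus> d1^* Q on G_1:
at [u:a\<rightarrow>b] the space P(b) \<oplus> Q(a); on (w o u, v o w) the block matrix diag(P(v o w), Q(w o u)).\<close>
definition pb_dim :: "('o, 'm) cat \<Rightarrow> ('o \<Rightarrow> nat) \<Rightarrow> ('o \<Rightarrow> nat) \<Rightarrow> 'm \<Rightarrow> nat" where
  "pb_dim C dP dQ u = dP (Cod C u) + dQ (Dom C u)"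

definition pb_mat :: "('o, 'm) cat \<Rightarrow> ('o \<Rightarrow> nat) \<Rightarrow> ('m \<Rightarrow> 'k::field mat)
    \<Rightarrow> ('o \<Rightarrow> nat) \<Rightarrow> ('m \<Rightarrow> 'k mat) \<Rightarrow> 'm \<Rightarrow> 'm \<Rightarrow> 'm \<Rightarrow> 'k mat" where
  "pb_mat C dP P dQ Q u v w =
     four_block_mat (P (Comp C v w)) (0\<^sub>m (dP (Cod C v)) (dQ (Dom C u)))
                    (0\<^sub>m (dQ (Cod C w)) (dP (Cod C u))) (Q (Comp C w u))"

text \<open>d^0 X = 0 for X = [M] - [N]: d0^*M \<oplus> d1^*N \<cong> d0^*N \<oplus> d1^*M as kG_1-modules,
i.e. a natural family of invertible matrices.\<close>
definition d0_vanishes :: "('o, 'm) cat \<Rightarrow> ('o \<Rightarrow> nat) \<Rightarrow> ('m \<Rightarrow> 'k::field mat)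
    \<Rightarrow> ('o \<Rightarrow> nat) \<Rightarrow> ('m \<Rightarrow> 'k mat) \<Rightarrow> bool" where
  "d0_vanishes C dM M dN N \<longleftrightarrow>
     (\<exists>T :: 'm \<Rightarrow> 'k mat.
        (\<forall>u. nonid C u \<longrightarrow>
           pb_dim C dM dN u = pb_dim C dN dM u \<and>
           T u \<in> carrier_mat (pb_dim C dN dM u) (pb_dim C dM dN u) \<and>
           invertible_mat (T u)) \<and>
        (\<forall>u v w. g1_hom C u v w \<longrightarrow>
           T v * pb_mat C dM M dN N u v w = pb_mat C dN N dM M u v w * T u))"

definition mat_rank :: "'k::field mat \<Rightarrow> nat" where
  "mat_rank A = vec_space.rank (dim_row A) A"

definition rk_inv :: "('m \<Rightarrow> 'k::field mat) \<Rightarrow> ('m \<Rightarrow> 'k mat) \<Rightarrow> 'm \<Rightarrow> int" where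
  "rk_inv M N f = int (mat_rank (M f)) - int (mat_rank (N f))"

definition g1_adj :: "('o, 'm) cat \<Rightarrow> 'm \<Rightarrow> 'm \<Rightarrow> bool" where
  "g1_adj C u v \<longleftrightarrow> (\<exists>w. g1_hom C u v w) \<or> (\<exists>w. g1_hom C v u w)"

definition line_component :: "('o, 'm) cat \<Rightarrow> 'm set \<Rightarrow> bool" where
  "line_component C S \<longleftrightarrow> (\<exists>u. nonid C u \<and> S = {v. (g1_adj C)\<^sup>*\<^sup>* u v})"

definition no_id_composites :: "('o, 'm) cat \<Rightarrow> bool" where
  "no_id_composites C \<longleftrightarrow>
     (\<forall>f g. nonid C f \<longrightarrow> nonid C g \<longrightarrow> Dom C g = Cod C f \<longrightarrow> Comp C g f \<notin> Id C ` Obj C)"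

end

theory Submission
  imports Defs "Jordan_Normal_Form.Matrix_Kernel"
begin

(* The isomorphism given by d0_vanishes, evaluated at the G_1-morphism (w o u, v o w) : [u] -> [v],
   is a pair of invertible matrices intertwining diag(M(v o w), N(w o u)) and
   diag(N(v o w), M(w o u)).  Rank is additive on block-diagonal matrices and invariant under
   invertible factors, so rk X(v o w) = rk X(w o u).  Taking w to be an identity, or factoring
   [u] -> [v] as [u] -> [w] -> [v] through G_1-morphisms indexed by identities, shows that rk X is
   invariant along G_1 and hence constant on line-components.  On dimensions, the isomorphism at
   [u : a -> b] gives dim M(b) + dim N(a) = dim N(b) + dim M(a), i.e. rk X(1_a) = rk X(1_b), and
   chaining this through u, w and v handles the identities. *)

lemma mat_rank_plus_kernel_dim:
  fixes A :: "'a::field mat"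
  assumes A: "A \<in> carrier_mat nr nc"
  shows "mat_rank A + kernel_dim A = nc"
proof -
  interpret NC: vec_space "TYPE('a)" nc .
  interpret NR: vec_space "TYPE('a)" nr .
  have hom: "(\<lambda>x. A *\<^sub>v x) \<in> LinearCombinations.module_hom class_ring NC.V NR.V"
    unfolding LinearCombinations.module_hom_def using A
    by (auto simp: mult_add_distrib_mat_vec mult_mat_vec)
  interpret L: linear_map class_ring NC.V NR.V "\<lambda>x. A *\<^sub>v x"
    by (intro linear_map.intro mod_hom.intro) (unfold_locales, rule hom)
  have "NR.span (set (cols A)) = {y \<in> carrier_vec nr. \<exists>x\<in>carrier_vec nc. A *\<^sub>v x = y}"
    using NR.col_space_eq[OF A] A unfolding NR.col_space_def by simp
  then have im: "L.imT = NR.span (set (cols A))"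
    unfolding L.im_def using A by fastforce
  have ker: "L.kerT = mat_kernel A"
    unfolding L.ker_def mat_kernel_def using A by auto
  note L.rank_nullity[OF NC.fin_dim]
  moreover have "mat_rank A = NR.rank A" unfolding mat_rank_def using A by simp
  ultimately show ?thesis
    using A unfolding NR.rank_def im ker NC.dim_is_n kernel_dim_def by simp
qed

lemma mat_kernel_block_diag_split:
  fixes B D :: "'a::field mat"
  assumes B: "B \<in> carrier_mat nr1 nc1" and D: "D \<in> carrier_mat nr2 nc2"
    and k: "k \<in> mat_kernel (four_block_mat B (0\<^sub>m nr1 nc2) (0\<^sub>m nr2 nc1) D)"
  shows "vec_first k nc1 \<in> mat_kernel B" and "vec_last k nc2 \<in> mat_kernel D"
proof -
  define b d where "b = vec_first k nc1" and "d = vec_last k nc2"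
  have A: "four_block_mat B (0\<^sub>m nr1 nc2) (0\<^sub>m nr2 nc1) D \<in> carrier_mat (nr1 + nr2) (nc1 + nc2)"
    using B D by auto
  then have "k \<in> carrier_vec (nc1 + nc2)" using k mat_kernel_carrier by blast
  then have k_split: "k = b @\<^sub>v d" unfolding b_def d_def by simp
  have b: "b \<in> carrier_vec nc1" and d: "d \<in> carrier_vec nc2" unfolding b_def d_def by auto
  have "four_block_mat B (0\<^sub>m nr1 nc2) (0\<^sub>m nr2 nc1) D *\<^sub>v (b @\<^sub>v d) = B *\<^sub>v b @\<^sub>v D *\<^sub>v d"
    using B D b d by (subst four_block_mat_mult_vec[OF B _ _ D b d]) auto
  then have "B *\<^sub>v b @\<^sub>v D *\<^sub>v d = 0\<^sub>v nr1 @\<^sub>v 0\<^sub>v nr2"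
    using mat_kernelD[OF A k] k_split by auto
  then have "B *\<^sub>v b = 0\<^sub>v nr1" and "D *\<^sub>v d = 0\<^sub>v nr2"
    using append_vec_eq[of "B *\<^sub>v b" nr1 "0\<^sub>v nr1"] B b by auto
  then show "b \<in> mat_kernel B" and "d \<in> mat_kernel D"
    using mat_kernelI[OF B b] mat_kernelI[OF D d] by auto
qed

context vardim
begin

lemma kernel_basis_block_diag:
  fixes B D :: "'a::field mat"
  assumes B: "B \<in> carrier_mat nr1 nc1" and D: "D \<in> carrier_mat nr2 nc2"
    and bB: "kernel.basis nc1 B baseB" and bD: "kernel.basis nc2 D baseD"
  shows "kernel.basis (nc1 + nc2) (four_block_mat B (0\<^sub>m nr1 nc2) (0\<^sub>m nr2 nc1) D)
           (padr nc2 ` baseB \<union> padl nc1 ` baseD)"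
    (is "kernel.basis _ ?A ?base")
proof -
  have A: "?A \<in> carrier_mat (nr1 + nr2) (nc1 + nc2)" using B D by auto
  interpret NC: vectorspace class_ring "M (nc1 + nc2)" using vec_vs .
  interpret KA: kernel "nr1 + nr2" "nc1 + nc2" ?A by unfold_locales (rule A)
  interpret KB: kernel nr1 nc1 B by unfold_locales (rule B)
  interpret KD: kernel nr2 nc2 D by unfold_locales (rule D)
  have kerB: "baseB \<subseteq> mat_kernel B" and spanB: "span nc1 baseB = mat_kernel B"
    and indB: "\<not> lin_dep nc1 baseB"
    using bB KB.span_same KB.lindep_same unfolding KB.Ker.basis_def by auto
  have kerD: "baseD \<subseteq> mat_kernel D" and spanD: "span nc2 baseD = mat_kernel D"
    and indD: "\<not> lin_dep nc2 baseD"
    using bD KD.span_same KD.lindep_same unfolding KD.Ker.basis_def by auto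
  have cB: "baseB \<subseteq> carrier_vec nc1" using kerB mat_kernel_carrier[OF B] by auto
  have cD: "baseD \<subseteq> carrier_vec nc2" using kerD mat_kernel_carrier[OF D] by auto
  have ker_base: "?base \<subseteq> mat_kernel ?A"
    using kerB kerD kernel_padr[OF _ B zero_carrier_mat D] kernel_padl[OF _ B zero_carrier_mat D]
    by blast
  have c_base: "?base \<subseteq> carrier_vec (nc1 + nc2)"
    using ker_base mat_kernel_carrier[OF A] by auto
  have "mat_kernel ?A \<subseteq> span (nc1 + nc2) ?base"
  proof
    fix k assume k: "k \<in> mat_kernel ?A"
    define b d where "b = vec_first k nc1" and "d = vec_last k nc2"
    have "k \<in> carrier_vec (nc1 + nc2)" using k mat_kernel_carrier[OF A] by auto
    then have "k = b @\<^sub>v d" unfolding b_def d_def by simp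
    moreover have "b \<in> carrier_vec nc1" "d \<in> carrier_vec nc2" unfolding b_def d_def by auto
    ultimately have k_split: "k = padr nc2 b + padl nc1 d" by auto
    have "b \<in> mat_kernel B" and "d \<in> mat_kernel D"
      using mat_kernel_block_diag_split[OF B D k] unfolding b_def d_def by auto
    then have "b \<in> span nc1 baseB" and "d \<in> span nc2 baseD" using spanB spanD by auto
    then have "padr nc2 b \<in> span (nc1 + nc2) (padr nc2 ` baseB)"
      and "padl nc1 d \<in> span (nc1 + nc2) (padl nc1 ` baseD)"
      using span_pad(1)[OF cB, of nc2] span_pad(2)[OF cD, of nc1]
      unfolding add.commute[of nc2 nc1] by blast+
    then have "padr nc2 b \<in> span (nc1 + nc2) ?base" and "padl nc1 d \<in> span (nc1 + nc2) ?base"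
      using NC.span_is_monotone[of "padr nc2 ` baseB" ?base]
        NC.span_is_monotone[of "padl nc1 ` baseD" ?base] by blast+
    then have "padr nc2 b + padl nc1 d \<in> span (nc1 + nc2) ?base"
      using NC.span_add1[of ?base] c_base by (simp add: module_vec_simps)
    then show "k \<in> span (nc1 + nc2) ?base" unfolding k_split .
  qed
  moreover have "\<not> lin_dep (nc1 + nc2) ?base"
    using padr_padl_lindep[OF cB indB cD indD] .
  ultimately show ?thesis
    using ker_base KA.Ker.span_closed[OF ker_base]
    unfolding KA.Ker.basis_def KA.span_same[OF ker_base] KA.lindep_same[OF ker_base] by auto
qed

end

lemma kernel_dim_block_diag:
  fixes B D :: "'a::field mat"
  assumes B: "B \<in> carrier_mat nr1 nc1" and D: "D \<in> carrier_mat nr2 nc2"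
  shows "kernel_dim (four_block_mat B (0\<^sub>m nr1 nc2) (0\<^sub>m nr2 nc1) D) = kernel_dim B + kernel_dim D"
    (is "kernel_dim ?A = _")
proof -
  interpret vardim "TYPE('a)" .
  have A: "?A \<in> carrier_mat (nr1 + nr2) (nc1 + nc2)" using B D by auto
  interpret KA: kernel "nr1 + nr2" "nc1 + nc2" ?A by unfold_locales (rule A)
  interpret KB: kernel nr1 nc1 B by unfold_locales (rule B)
  interpret KD: kernel nr2 nc2 D by unfold_locales (rule D)
  obtain baseB where finB: "finite baseB" and bB: "KB.basis baseB"
    using kernel_basis_exists[OF B] by blast
  obtain baseD where finD: "finite baseD" and bD: "KD.basis baseD"
    using kernel_basis_exists[OF D] by blast
  have kerB: "baseB \<subseteq> mat_kernel B" and kerD: "baseD \<subseteq> mat_kernel D"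
    using bB bD unfolding KB.Ker.basis_def KD.Ker.basis_def by auto
  have cB: "baseB \<subseteq> carrier_vec nc1" and cD: "baseD \<subseteq> carrier_vec nc2"
    using kerB kerD mat_kernel_carrier[OF B] mat_kernel_carrier[OF D] by auto
  have "0\<^sub>v nc1 \<notin> baseB"
    using bB KB.Ker.vs_zero_lin_dep[OF kerB] unfolding KB.Ker.basis_def by auto
  then have disjoint: "padr nc2 ` baseB \<inter> padl nc1 ` baseD = {}"
    by (rule pad_disjoint[OF cB _ cD])
  have "kernel_dim ?A = card (padr nc2 ` baseB \<union> padl nc1 ` baseD)"
    using KA.Ker.dim_basis kernel_basis_block_diag[OF B D bB bD] finB finD by simp
  also have "\<dots> = card (padr nc2 ` baseB) + card (padl nc1 ` baseD)"
    using disjoint finB finD by (simp add: card_Un_disjoint)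
  also have "\<dots> = card baseB + card baseD"
    using card_image[OF inj_on_subset[OF padr_inj cB]] card_image[OF inj_on_subset[OF padl_inj cD]]
    by simp
  also have "\<dots> = kernel_dim B + kernel_dim D"
    using KB.Ker.dim_basis[OF finB bB] KD.Ker.dim_basis[OF finD bD] by simp
  finally show ?thesis .
qed

lemma mat_rank_block_diag:
  fixes B D :: "'a::field mat"
  assumes B: "B \<in> carrier_mat nr1 nc1" and D: "D \<in> carrier_mat nr2 nc2"
  shows "mat_rank (four_block_mat B (0\<^sub>m nr1 nc2) (0\<^sub>m nr2 nc1) D) = mat_rank B + mat_rank D"
    (is "mat_rank ?A = _")
proof -
  have "?A \<in> carrier_mat (nr1 + nr2) (nc1 + nc2)" using B D by auto
  then have "mat_rank ?A + kernel_dim ?A = nc1 + nc2" by (rule mat_rank_plus_kernel_dim)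
  then show ?thesis
    using kernel_dim_block_diag[OF B D] mat_rank_plus_kernel_dim[OF B] mat_rank_plus_kernel_dim[OF D]
    by linarith
qed

lemma mat_rank_one_mat: "mat_rank (1\<^sub>m n :: 'a::field mat) = n"
  using mat_rank_plus_kernel_dim[OF one_carrier_mat, where 'a = 'a, of n]
    kernel_one_mat(1)[where 'a = 'a, of n]
  unfolding kernel_dim_def by simp

lemma invertible_matE:
  fixes P :: "'a::field mat"
  assumes "invertible_mat P" and "P \<in> carrier_mat n n"
  obtains Q where "Q \<in> carrier_mat n n" and "P * Q = 1\<^sub>m n" and "Q * P = 1\<^sub>m n"
proof -
  from assms obtain Q where PQ: "P * Q = 1\<^sub>m n" and QP: "Q * P = 1\<^sub>m (dim_row Q)"
    unfolding invertible_mat_def inverts_mat_def by auto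
  have "dim_row Q = n" using arg_cong[OF QP, of dim_col] assms(2) by simp
  moreover have "dim_col Q = n" using arg_cong[OF PQ, of dim_col] by simp
  ultimately show ?thesis using that PQ QP by blast
qed

lemma mat_rank_mult_invertible_left:
  fixes A P :: "'a::field mat"
  assumes A: "A \<in> carrier_mat nr nc" and P: "P \<in> carrier_mat nr nr" and "invertible_mat P"
  shows "mat_rank (P * A) = mat_rank A"
proof -
  obtain Q where Q: "Q \<in> carrier_mat nr nr" and "Q * P = 1\<^sub>m nr"
    using invertible_matE[OF \<open>invertible_mat P\<close> P] by blast
  then have "mat_kernel (P * A) = mat_kernel A" by (rule mat_kernel_mult_eq[OF A P])
  then have "kernel_dim (P * A) = kernel_dim A" unfolding kernel_dim_def using A P by simp
  then show ?thesis
    using mat_rank_plus_kernel_dim[OF A] mat_rank_plus_kernel_dim[OF mult_carrier_mat[OF P A]] by simp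
qed

lemma mat_rank_mult_invertible_right:
  fixes A Q :: "'a::field mat"
  assumes A: "A \<in> carrier_mat nr nc" and Q: "Q \<in> carrier_mat nc nc" and "invertible_mat Q"
  shows "mat_rank (A * Q) = mat_rank A"
proof -
  obtain R where R: "R \<in> carrier_mat nc nc" and "Q * R = 1\<^sub>m nc"
    using invertible_matE[OF \<open>invertible_mat Q\<close> Q] by blast
  then have "kernel.dim nc (A * Q) = kernel.dim nc A" by (rule mat_kernel_dim_mult_eq_right[OF A Q])
  then have "kernel_dim (A * Q) = kernel_dim A" unfolding kernel_dim_def using A Q by simp
  then show ?thesis
    using mat_rank_plus_kernel_dim[OF A] mat_rank_plus_kernel_dim[OF mult_carrier_mat[OF A Q]] by simp
qed

lemma mat_rank_eq_if_equivalent: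
  fixes A B P Q :: "'a::field mat"
  assumes A: "A \<in> carrier_mat nr nc" and B: "B \<in> carrier_mat nr nc"
    and P: "P \<in> carrier_mat nr nr" "invertible_mat P"
    and Q: "Q \<in> carrier_mat nc nc" "invertible_mat Q"
    and "P * A = B * Q"
  shows "mat_rank A = mat_rank B"
  using mat_rank_mult_invertible_left[OF A P] mat_rank_mult_invertible_right[OF B Q] assms(7)
  by simp

lemma kC_module_carrier_mat:
  assumes "kC_module C d F" and "f \<in> Mor C"
  shows "F f \<in> carrier_mat (d (Cod C f)) (d (Dom C f))"
  using assms unfolding kC_module_def by blast

lemma kC_module_g1_hom_carrier_mat:
  assumes "category C" and "kC_module C d F" and "g1_hom C u v w"
  shows "F (Comp C v w) \<in> carrier_mat (d (Cod C v)) (d (Cod C u))"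
    and "F (Comp C w u) \<in> carrier_mat (d (Dom C v)) (d (Dom C u))"
proof -
  have "Comp C v w \<in> Mor C" "Dom C (Comp C v w) = Cod C u" "Cod C (Comp C v w) = Cod C v"
    and "Comp C w u \<in> Mor C" "Dom C (Comp C w u) = Dom C u" "Cod C (Comp C w u) = Dom C v"
    using assms(1,3) unfolding category_def g1_hom_def nonid_def by auto
  then show "F (Comp C v w) \<in> carrier_mat (d (Cod C v)) (d (Cod C u))"
    and "F (Comp C w u) \<in> carrier_mat (d (Dom C v)) (d (Dom C u))"
    using kC_module_carrier_mat[OF assms(2)] by metis+
qed

lemma pb_mat_carrier_mat:
  assumes "category C" "kC_module C dP P" "kC_module C dQ Q" "g1_hom C u v w"
  shows "pb_mat C dP P dQ Q u v w \<in> carrier_mat (pb_dim C dP dQ v) (pb_dim C dP dQ u)"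
  using kC_module_g1_hom_carrier_mat[OF assms(1,2,4)] kC_module_g1_hom_carrier_mat[OF assms(1,3,4)]
  unfolding pb_mat_def pb_dim_def by (auto intro!: four_block_carrier_mat)

lemma mat_rank_pb_mat:
  assumes "category C" "kC_module C dP P" "kC_module C dQ Q" "g1_hom C u v w"
  shows "mat_rank (pb_mat C dP P dQ Q u v w) = mat_rank (P (Comp C v w)) + mat_rank (Q (Comp C w u))"
  using assms(4) unfolding pb_mat_def g1_hom_def
  by (auto intro!: mat_rank_block_diag kC_module_g1_hom_carrier_mat[OF assms(1,2,4)]
        kC_module_g1_hom_carrier_mat[OF assms(1,3,4)])

lemma rk_inv_comp_eq:
  assumes cat: "category C" and kM: "kC_module C dM M" and kN: "kC_module C dN N"
    and "d0_vanishes C dM M dN N" and uvw: "g1_hom C u v w"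
  shows "rk_inv M N (Comp C v w) = rk_inv M N (Comp C w u)"
proof -
  from \<open>d0_vanishes C dM M dN N\<close> obtain T where
    T: "\<And>u. nonid C u \<Longrightarrow> pb_dim C dM dN u = pb_dim C dN dM u \<and>
          T u \<in> carrier_mat (pb_dim C dN dM u) (pb_dim C dM dN u) \<and> invertible_mat (T u)"
    and natural: "T v * pb_mat C dM M dN N u v w = pb_mat C dN N dM M u v w * T u"
    using uvw unfolding d0_vanishes_def by blast
  have "nonid C u" "nonid C v" using uvw unfolding g1_hom_def by auto
  then have "mat_rank (pb_mat C dM M dN N u v w) = mat_rank (pb_mat C dN N dM M u v w)"
    using T[of u] T[of v] natural
      pb_mat_carrier_mat[OF cat kM kN uvw] pb_mat_carrier_mat[OF cat kN kM uvw]
    by (intro mat_rank_eq_if_equivalent[where P = "T v" and Q = "T u"]) auto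
  then show ?thesis
    unfolding mat_rank_pb_mat[OF cat kM kN uvw] mat_rank_pb_mat[OF cat kN kM uvw] rk_inv_def
    by simp
qed

lemma rk_inv_g1_hom:
  assumes cat: "category C" and kM: "kC_module C dM M" and kN: "kC_module C dN N"
    and d0: "d0_vanishes C dM M dN N" and uvw: "g1_hom C u v w"
  shows "rk_inv M N u = rk_inv M N v"
proof -
  note comp_eq = rk_inv_comp_eq[OF cat kM kN d0]
  have u: "u \<in> Mor C" and v: "v \<in> Mor C" and w: "w \<in> Mor C"
    and dom_w: "Dom C w = Cod C u" and cod_w: "Cod C w = Dom C v"
    using uvw unfolding g1_hom_def nonid_def by auto
  have id_right: "Comp C f (Id C (Dom C f)) = f" and id_left: "Comp C (Id C (Cod C f)) f = f"
    if "f \<in> Mor C" for f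
    using cat that unfolding category_def by auto
  show ?thesis
  proof (cases "nonid C w")
    case True
    have "g1_hom C u w (Id C (Cod C u))" and "g1_hom C w v (Id C (Dom C v))"
      using uvw True cat u v unfolding g1_hom_def category_def by auto
    then show ?thesis
      using comp_eq id_left id_right u v w dom_w cod_w by metis
  next
    case False
    then obtain x where "w = Id C x" "x \<in> Obj C" using w unfolding nonid_def by blast
    then have "w = Id C (Cod C u)" and "w = Id C (Dom C v)"
      using cat dom_w cod_w unfolding category_def by auto
    then show ?thesis
      using comp_eq[OF uvw] id_left[OF u] id_right[OF v] by metis
  qed
qed

lemma rk_inv_Id:
  assumes "kC_module C dM M" and "kC_module C dN N" and "x \<in> Obj C"
  shows "rk_inv M N (Id C x) = int (dM x) - int (dN x)"
  using assms unfolding kC_module_def rk_inv_def by (simp add: mat_rank_one_mat)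

lemma rk_inv_Id_Cod_eq_Dom:
  assumes cat: "category C" and kM: "kC_module C dM M" and kN: "kC_module C dN N"
    and d0: "d0_vanishes C dM M dN N" and f: "f \<in> Mor C"
  shows "rk_inv M N (Id C (Cod C f)) = rk_inv M N (Id C (Dom C f))"
proof (cases "nonid C f")
  case True
  then have "pb_dim C dM dN f = pb_dim C dN dM f"
    using d0 unfolding d0_vanishes_def by blast
  moreover have "Dom C f \<in> Obj C" "Cod C f \<in> Obj C" using cat f unfolding category_def by auto
  ultimately show ?thesis
    using rk_inv_Id[OF kM kN] unfolding pb_dim_def by simp
next
  case False
  then have "Cod C f = Dom C f" using cat f unfolding nonid_def category_def by auto
  then show ?thesis by simp
qed

lemma rk_inv_Id_g1_hom:
  assumes cat: "category C" and kM: "kC_module C dM M" and kN: "kC_module C dN N"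
    and d0: "d0_vanishes C dM M dN N" and uvw: "g1_hom C u v w"
  shows "rk_inv M N (Id C (Dom C u)) = rk_inv M N (Id C (Dom C v))"
proof -
  have "u \<in> Mor C" "w \<in> Mor C" "Dom C w = Cod C u" "Cod C w = Dom C v"
    using uvw unfolding g1_hom_def nonid_def by auto
  then show ?thesis
    using rk_inv_Id_Cod_eq_Dom[OF cat kM kN d0] by metis
qed

lemma line_component_nonid:
  assumes "line_component C S" and "v \<in> S"
  shows "nonid C v"
proof -
  obtain u where "nonid C u" and S: "S = {v. (g1_adj C)\<^sup>*\<^sup>* u v}"
    using assms(1) unfolding line_component_def by blast
  have "(g1_adj C)\<^sup>*\<^sup>* u v" using assms(2) S by blast
  then show ?thesis
    by (induction rule: rtranclp_induct) (use \<open>nonid C u\<close> in \<open>auto simp: g1_adj_def g1_hom_def\<close>)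
qed

lemma line_component_invariant:
  assumes "line_component C S"
    and invariant: "\<And>u v w. g1_hom C u v w \<Longrightarrow> \<phi> u = \<phi> v"
    and "u \<in> S" and "v \<in> S"
  shows "\<phi> u = \<phi> v"
proof -
  obtain u\<^sub>0 where S: "S = {v. (g1_adj C)\<^sup>*\<^sup>* u\<^sub>0 v}"
    using assms(1) unfolding line_component_def by blast
  have "\<phi> v = \<phi> u\<^sub>0" if "(g1_adj C)\<^sup>*\<^sup>* u\<^sub>0 v" for v
    using that
  proof (induction rule: rtranclp_induct)
    case (step y z)
    then show ?case using invariant unfolding g1_adj_def by metis
  qed simp
  then show ?thesis using assms(3,4) S by (metis mem_Collect_eq)
qed

theorem proposition4p4:
  fixes C :: "('o, 'm) cat"
    and dM dN :: "'o \<Rightarrow> nat"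
    and M N :: "'m \<Rightarrow> 'k::field mat"
    and S :: "'m set"
  assumes "category C"
    and "no_id_composites C"
    and "kC_module C dM M"
    and "kC_module C dN N"
    and "d0_vanishes C dM M dN N"
    and "line_component C S"
  shows "(\<forall>u\<in>S. \<forall>v\<in>S. rk_inv M N u = rk_inv M N v) \<and>
         (\<forall>x\<in>Dom C ` S \<union> Cod C ` S. \<forall>y\<in>Dom C ` S \<union> Cod C ` S.
            rk_inv M N (Id C x) = rk_inv M N (Id C y))"
proof -
  note setting = assms(1,3,4,5)
  have on_morphisms: "rk_inv M N u = rk_inv M N v" if "u \<in> S" "v \<in> S" for u v
    using line_component_invariant[OF assms(6) rk_inv_g1_hom[OF setting] that] .
  have on_domains: "rk_inv M N (Id C (Dom C u)) = rk_inv M N (Id C (Dom C v))"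
    if "u \<in> S" "v \<in> S" for u v
    using line_component_invariant[OF assms(6) rk_inv_Id_g1_hom[OF setting] that] .
  have on_ends: "rk_inv M N (Id C x) = rk_inv M N (Id C (Dom C v))"
    if "v \<in> S" and "x = Dom C v \<or> x = Cod C v" for v x
    using that line_component_nonid[OF assms(6)] rk_inv_Id_Cod_eq_Dom[OF setting]
    unfolding nonid_def by blast
  show ?thesis
  proof (intro conjI ballI)
    fix u v assume "u \<in> S" "v \<in> S"
    then show "rk_inv M N u = rk_inv M N v" by (rule on_morphisms)
  next
    fix x y assume "x \<in> Dom C ` S \<union> Cod C ` S" "y \<in> Dom C ` S \<union> Cod C ` S"
    then obtain u v where "u \<in> S" "x = Dom C u \<or> x = Cod C u"
      and "v \<in> S" "y = Dom C v \<or> y = Cod C v"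
      by blast
    then show "rk_inv M N (Id C x) = rk_inv M N (Id C y)"
      using on_ends on_domains by metis
  qed
qed

end
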